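(* Let $q'>0$, $e'\in(0,1)$, $q_{\max}>0$, and let $\mathcal D_1=\{(e,\omega'):0\le e\le1,\ 0\le\omega'\le\pi\}$, $\mathcal D_2=\{(q,\omega):0<q\le q_{\max},\ 0\le\omega\le\pi/2\}$. For each $(q,\omega)\in\mathcal D_2$, $$\min_{(e,\omega')\in\mathcal D_1}\delta_{\rm nod}=\max\{0,\ \ell^\omega_{\rm int},\ \ell^\omega_{\rm ext}\},\qquad \max_{(e,\omega')\in\mathcal D_1}\delta_{\rm nod}=\max\{u^\omega_{\rm int},\ u^\omega_{\rm ext},\ u^\omega_{\rm link}\},$$ where $\ell^\omega_{\rm int}(q,\omega)=q'-\frac{2q}{1-\cos\omega}$ (equal to $-\infty$ at $\omega=0$), $\ell^\omega_{\rm ext}(q,\omega)=q-Q'$, $u^\omega_{\rm int}(q,\omega)=p'-q$, $$u^\omega_{\rm ext}(q,\omega)=\min\Big\{\frac{2q}{1-\cos\omega}-\frac{p'}{1-\hat\xi'_*},\ \frac{2q}{1+\cos\omega}-q'\Big\},\quad \hat\xi'_*=\min\{\xi'_*,e'\},\quad \xi'_*=\frac{4q\cos\omega}{p'\sin^2\omega+\sqrt{p'^2\sin^4\omega+16q^2\cos^2\omega}},$$ $$u^\omega_{\rm link}(q,\omega)=\min\Big\{Q'-\frac{q(1+\hat e_* )}{1+\hat e_*\cos\omega},\ \frac{2q}{1-\cos\omega}-q'\Big\},\quad \hat e_*=\max\{0,\min\{e_*,1\}\},$$ $$e_*(q,\omega)=\frac{2\big(p'-q(1-e'^2)\big)}{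q(1-e'^2)+\sqrt{q^2(1-e'^2)^2+4p'\cos^2\omega\,\big(p'-q(1-e'^2)\big)}}.$$
   Context: For $q>0$, $e\in[0,1]$ and angles $\omega,\omega'$, define $r_{\pm}=\frac{q(1+e)}{1\pm e\cos\omega}$, $r'_{\pm}=\frac{q'(1+e')}{1\pm e'\cos\omega'}$ (extended-real value $+\infty$ allowed when a denominator vanishes; all functions may take values $\pm\infty$ as limits), $d^+=r'_+-r_+$, $d^-=r'_--r_-$, and the nodal distance $\delta_{\rm nod}(q,e,\omega,\omega')=\min\{|d^+|,|d^-|\}$. Also $p'=q'(1+e')$, $Q'=\frac{q'(1+e')}{1-e'}$. *)

theory Defs
  imports "HOL-Analysis.Analysis" "HOL-Library.Extended_Real"
begin

definition pdiv :: "real \<Rightarrow> real \<Rightarrow> ereal" where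
  "pdiv a b = (if b = 0 then \<infinity> else ereal (a / b))"

definition r_plus :: "real \<Rightarrow> real \<Rightarrow> real \<Rightarrow> ereal" where
  "r_plus q e w = pdiv (q * (1 + e)) (1 + e * cos w)"

definition r_minus :: "real \<Rightarrow> real \<Rightarrow> real \<Rightarrow> ereal" where
  "r_minus q e w = pdiv (q * (1 + e)) (1 - e * cos w)"

definition delta_nod :: "real \<Rightarrow> real \<Rightarrow> real \<Rightarrow> real \<Rightarrow> real \<Rightarrow> real \<Rightarrow> ereal" where
  "delta_nod q' e' q e w w' =
     min \<bar>r_plus q' e' w' - r_plus q e w\<bar> \<bar>r_minus q' e' w' - r_minus q e w\<bar>"

definition p_prime :: "real \<Rightarrow> real \<Rightarrow> real" where
  "p_prime q' e' = q' * (1 + e')"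

definition Q_prime :: "real \<Rightarrow> real \<Rightarrow> real" where
  "Q_prime q' e' = q' * (1 + e') / (1 - e')"

definition D1 :: "(real \<times> real) set" where
  "D1 = {(e, w'). 0 \<le> e \<and> e \<le> 1 \<and> 0 \<le> w' \<and> w' \<le> pi}"

definition l_int :: "real \<Rightarrow> real \<Rightarrow> real \<Rightarrow> real \<Rightarrow> ereal" where
  "l_int q' e' q w = ereal q' - pdiv (2 * q) (1 - cos w)"

definition l_ext :: "real \<Rightarrow> real \<Rightarrow> real \<Rightarrow> real \<Rightarrow> ereal" where
  "l_ext q' e' q w = ereal (q - Q_prime q' e')"

definition u_int :: "real \<Rightarrow> real \<Rightarrow> real \<Rightarrow> real \<Rightarrow> ereal" where
  "u_int q' e' q w = ereal (p_prime q' e' - q)"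

definition xi_star :: "real \<Rightarrow> real \<Rightarrow> real \<Rightarrow> real \<Rightarrow> real" where
  "xi_star q' e' q w =
     4 * q * cos w / (p_prime q' e' * (sin w)^2
        + sqrt ((p_prime q' e')^2 * (sin w)^4 + 16 * q^2 * (cos w)^2))"

definition xi_hat :: "real \<Rightarrow> real \<Rightarrow> real \<Rightarrow> real \<Rightarrow> real" where
  "xi_hat q' e' q w = min (xi_star q' e' q w) e'"

definition u_ext :: "real \<Rightarrow> real \<Rightarrow> real \<Rightarrow> real \<Rightarrow> ereal" where
  "u_ext q' e' q w =
     min (pdiv (2 * q) (1 - cos w) - ereal (p_prime q' e' / (1 - xi_hat q' e' q w)))
         (pdiv (2 * q) (1 + cos w) - ereal q')"

definition e_star :: "real \<Rightarrow> real \<Rightarrow> real \<Rightarrow> real \<Rightarrow> real" where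
  "e_star q' e' q w =
     2 * (p_prime q' e' - q * (1 - e'^2)) /
       (q * (1 - e'^2) + sqrt ((q * (1 - e'^2))^2
          + 4 * p_prime q' e' * (cos w)^2 * (p_prime q' e' - q * (1 - e'^2))))"

definition e_hat :: "real \<Rightarrow> real \<Rightarrow> real \<Rightarrow> real \<Rightarrow> real" where
  "e_hat q' e' q w = max 0 (min (e_star q' e' q w) 1)"

definition u_link :: "real \<Rightarrow> real \<Rightarrow> real \<Rightarrow> real \<Rightarrow> ereal" where
  "u_link q' e' q w =
     min (ereal (Q_prime q' e' - q * (1 + e_hat q' e' q w) / (1 + e_hat q' e' q w * cos w)))
         (pdiv (2 * q) (1 - cos w) - ereal q')"

end

theory Submission
  imports Defs
begin

text \<open>Write c = cos \<omega> and x = e' cos \<omega>' \<in> [-e', e']. The nodal radii of the second orbit,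
  p'/(1 \<plusminus> x), lie in [q', Q']; those of the first, q(1+e)/(1 \<plusminus> e c), satisfy
  q \<le> r_+ \<le> r_- \<le> 2q/(1-c) and increase with e. This gives the lower bound at once, and it is
  attained at an extreme configuration or where the two orbits intersect. For the upper bound one
  splits by the signs of d^+ and d^-. If both are positive, delta_nod \<le> p' - q. If both are
  negative, delta_nod is at most min(2q/(1+c) - p'/(1+x), 2q/(1-c) - p'/(1-x)), an increasing and a
  decreasing function of x that balance at the root xi'_* of a quadratic. If the signs differ,
  delta_nod is at most min(Q' - r_+(e), r_-(e) - q'), which balances at e_*. Clipping these
  points to the admissible ranges gives the three candidates u. The case \<omega> = 0 is separate
  because r_- is infinite for e = 1.\<close>


text \<open>r_+ and r_- of the first orbit as real functions of c = cos \<omega>; they stay finite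
  except for c = 1, e = 1.\<close>
definition rad_plus :: "real \<Rightarrow> real \<Rightarrow> real \<Rightarrow> real" where
  "rad_plus q c e = q * (1 + e) / (1 + e * c)"

definition rad_minus :: "real \<Rightarrow> real \<Rightarrow> real \<Rightarrow> real" where
  "rad_minus q c e = q * (1 + e) / (1 - e * c)"

lemma rad_plus_0 [simp]: "rad_plus q c 0 = q"
  and rad_minus_0 [simp]: "rad_minus q c 0 = q"
  and rad_plus_1 [simp]: "rad_plus q c 1 = 2 * q / (1 + c)"
  and rad_minus_1 [simp]: "rad_minus q c 1 = 2 * q / (1 - c)"
  by (simp_all add: rad_plus_def rad_minus_def)

lemma mult_lt_1_of_le_1:
  fixes e c :: real
  assumes "0 \<le> e" "e \<le> 1" "0 \<le> c" "c < 1"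
  shows "e * c < 1"
  using mult_left_le_one_le[OF assms(3) assms(1,2)] assms(4) by linarith

lemma rad_plus_bounds:
  fixes q c e :: real
  assumes "0 < q" "0 \<le> c" "c \<le> 1" "0 \<le> e" "e \<le> 1"
  shows "q \<le> rad_plus q c e" "rad_plus q c e \<le> 2 * q / (1 + c)"
proof -
  have pos: "0 < 1 + e * c" "0 < 1 + c" using assms by (auto intro: add_pos_nonneg)
  have "q * (1 + e * c) \<le> q * (1 + e)"
    using assms mult_left_le[of c e] by (intro mult_left_mono) auto
  then show "q \<le> rad_plus q c e" using pos by (simp add: rad_plus_def le_divide_eq)
  have "0 \<le> q * ((1 - e) * (1 - c))" using assms by simp
  then show "rad_plus q c e \<le> 2 * q / (1 + c)"
    using pos by (simp add: rad_plus_def field_simps)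
qed

lemma rad_minus_bounds:
  fixes q c e :: real
  assumes "0 < q" "0 \<le> c" "c < 1" "0 \<le> e" "e \<le> 1"
  shows "q \<le> rad_minus q c e" "rad_minus q c e \<le> 2 * q / (1 - c)"
proof -
  have "0 < 1 - e * c" using mult_lt_1_of_le_1 assms by simp
  moreover have "0 \<le> e * c" "0 \<le> q * ((1 - e) * (1 + c))" using assms by simp_all
  ultimately show "q \<le> rad_minus q c e" "rad_minus q c e \<le> 2 * q / (1 - c)"
    using assms unfolding rad_minus_def by (simp_all add: field_simps)
qed

lemma rad_plus_le_rad_minus:
  fixes q c e :: real
  assumes "0 < q" "0 \<le> c" "c < 1" "0 \<le> e" "e \<le> 1"
  shows "rad_plus q c e \<le> rad_minus q c e"
proof -
  have "0 < 1 - e * c" using mult_lt_1_of_le_1 assms by simp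
  moreover have "0 \<le> e * c" using assms by simp
  ultimately have "1 - e * c \<le> 1 + e * c" "0 < (1 + e * c) * (1 - e * c)" by simp_all
  then show ?thesis
    unfolding rad_plus_def rad_minus_def using assms by (intro divide_left_mono) auto
qed

lemma rad_plus_mono:
  fixes q c e1 e2 :: real
  assumes "0 < q" "0 \<le> c" "c \<le> 1" "0 \<le> e1" "e1 \<le> e2"
  shows "rad_plus q c e1 \<le> rad_plus q c e2"
proof -
  have "0 < 1 + e1 * c" "0 < 1 + e2 * c" using assms by (auto intro: add_pos_nonneg)
  moreover have "0 \<le> q * ((e2 - e1) * (1 - c))" using assms by simp
  ultimately show ?thesis unfolding rad_plus_def by (simp add: field_simps)
qed

lemma rad_minus_mono:
  fixes q c e1 e2 :: real
  assumes "0 < q" "0 \<le> c" "c < 1" "0 \<le> e1" "e1 \<le> e2" "e2 \<le> 1"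
  shows "rad_minus q c e1 \<le> rad_minus q c e2"
proof -
  have "0 < 1 - e1 * c" "0 < 1 - e2 * c" using mult_lt_1_of_le_1 assms by simp_all
  moreover have "0 \<le> q * ((e2 - e1) * (1 + c))" using assms by simp
  ultimately show ?thesis unfolding rad_minus_def by (simp add: field_simps)
qed

lemma rad_minus_surj:
  fixes q c v :: real
  assumes "0 < q" "0 \<le> c" "q \<le> v" "v * (1 - c) \<le> 2 * q"
  obtains e where "0 \<le> e" "e \<le> 1" "e * c < 1" "rad_minus q c e = v"
proof
  define e where "e = (v - q) / (q + v * c)"
  have den: "0 < q + v * c" using assms by (auto intro: add_pos_nonneg)
  show "0 \<le> e" "e \<le> 1" using assms den by (simp_all add: e_def field_simps)
  have "1 - e * c = q * (1 + c) / (q + v * c)" "1 + e = v * (1 + c) / (q + v * c)"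
    using den by (simp_all add: e_def field_simps)
  moreover have "0 < q * (1 + c) / (q + v * c)" using assms den by simp
  ultimately show "e * c < 1" "rad_minus q c e = v"
    using assms den by (linarith, simp add: rad_minus_def)
qed

lemma outer_radius_bounds:
  fixes q' e' x :: real
  assumes "0 < q'" "e' < 1" "-e' \<le> x" "x \<le> e'"
  shows "q' \<le> p_prime q' e' / (1 + x)" "p_prime q' e' / (1 + x) \<le> Q_prime q' e'"
proof -
  have "0 < 1 + x" "0 < 1 - e'" using assms by auto
  moreover have "q' * (1 + x) \<le> q' * (1 + e')" "q' * (1 + e') * (1 - e') \<le> q' * (1 + e') * (1 + x)"
    using assms by (intro mult_left_mono; simp)+
  ultimately show "q' \<le> p_prime q' e' / (1 + x)" "p_prime q' e' / (1 + x) \<le> Q_prime q' e'"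
    by (simp_all add: p_prime_def Q_prime_def field_simps)
qed

lemma outer_radius_extremes:
  fixes q' e' :: real
  assumes "0 < q'" "0 < e'" "e' < 1"
  shows "p_prime q' e' / (1 + e') = q'" "p_prime q' e' / (1 - e') = Q_prime q' e'" "q' < Q_prime q' e'"
  using assms by (simp_all add: p_prime_def Q_prime_def field_simps)

lemma outer_radius_surj:
  fixes q' e' v :: real
  assumes "0 < q'" "0 < e'" "e' < 1" "q' \<le> v" "v \<le> Q_prime q' e'"
  obtains x where "-e' \<le> x" "x \<le> e'" "p_prime q' e' / (1 - x) = v"
proof
  define x where "x = 1 - p_prime q' e' / v"
  have v: "0 < v" "v * (1 - e') \<le> p_prime q' e'"
    using assms by (simp_all add: Q_prime_def p_prime_def le_divide_eq mult.commute)
  have "p_prime q' e' \<le> (1 + e') * v" using assms by (simp add: p_prime_def mult.commute mult_right_mono)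
  then show "-e' \<le> x" "x \<le> e'"
    using assms v by (simp_all add: x_def p_prime_def field_simps)
  have "0 < p_prime q' e'" using assms by (simp add: p_prime_def)
  then show "p_prime q' e' / (1 - x) = v" using v by (simp add: x_def)
qed

text \<open>The root of a y^2 + b y = k in the cancellation-free form in which the paper
  writes xi'_* and e_*.\<close>
lemma quadratic_root_stable:
  fixes a b k :: real
  assumes "0 < b" "0 \<le> b\<^sup>2 + 4 * a * k"
  defines "y \<equiv> 2 * k / (b + sqrt (b\<^sup>2 + 4 * a * k))"
  shows "a * y\<^sup>2 + b * y = k" "0 \<le> y \<longleftrightarrow> 0 \<le> k"
proof -
  define S where "S = sqrt (b\<^sup>2 + 4 * a * k)"
  have S: "S\<^sup>2 = b\<^sup>2 + 4 * a * k" "0 \<le> S" using assms(2) by (simp_all add: S_def)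
  have den: "0 < b + S" using assms(1) S(2) by linarith
  have y: "y = 2 * k / (b + S)" by (simp add: y_def S_def)
  have yS: "y * (b + S) = 2 * k" using den by (simp add: y)
  have "(a * y\<^sup>2 + b * y - k) * (b + S)\<^sup>2
      = a * (y * (b + S))\<^sup>2 + b * (y * (b + S)) * (b + S) - k * (b + S)\<^sup>2"
    by (simp add: algebra_simps power2_eq_square)
  also have "\<dots> = k * (b\<^sup>2 + 4 * a * k - S\<^sup>2)"
    unfolding yS by (simp add: algebra_simps power2_eq_square)
  finally show "a * y\<^sup>2 + b * y = k" using S(1) den by simp
  show "0 \<le> y \<longleftrightarrow> 0 \<le> k" using den by (simp add: y zero_le_divide_iff)
qed

lemma quadratic_mono_nonneg:
  fixes a b y z :: real
  assumes "0 \<le> a" "0 \<le> b" "0 \<le> y" "y \<le> z"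
  shows "a * y\<^sup>2 + b * y \<le> a * z\<^sup>2 + b * z"
  using assms by (intro add_mono mult_left_mono power_mono) auto

lemma xi_balance_identity:
  fixes q p c y :: real
  assumes "\<bar>c\<bar> < 1" "\<bar>y\<bar> < 1"
  shows "(2 * q / (1 - c) - p / (1 - y)) - (2 * q / (1 + c) - p / (1 + y))
    = -2 * (2 * q * c * y\<^sup>2 + p * (1 - c\<^sup>2) * y - 2 * q * c) / ((1 - c\<^sup>2) * (1 - y\<^sup>2))"
proof -
  have "0 < 1 - c" "0 < 1 + c" "0 < 1 - y" "0 < 1 + y" using assms by auto
  moreover have "(1 - c\<^sup>2) * (1 - y\<^sup>2) = ((1 - c) * (1 + c)) * ((1 - y) * (1 + y))"
    by (simp add: algebra_simps power2_eq_square)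
  ultimately show ?thesis by (simp add: divide_simps) (simp add: algebra_simps power2_eq_square)
qed

lemma e_balance_identity:
  fixes q' e' q c y :: real
  assumes "\<bar>e'\<bar> < 1" "\<bar>y * c\<bar> < 1"
  shows "(Q_prime q' e' + q') - (rad_plus q c y + rad_minus q c y)
    = -2 * (p_prime q' e' * c\<^sup>2 * y\<^sup>2 + q * (1 - e'\<^sup>2) * y + q * (1 - e'\<^sup>2) - p_prime q' e')
        / ((1 - e'\<^sup>2) * (1 - y\<^sup>2 * c\<^sup>2))"
proof -
  have "0 < 1 - e'" "0 < 1 + e'" "0 < 1 - y * c" "0 < 1 + y * c" using assms by auto
  moreover have "(1 - e'\<^sup>2) * (1 - y\<^sup>2 * c\<^sup>2) = ((1 - e') * (1 + e')) * ((1 - y * c) * (1 + y * c))"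
    by (simp add: algebra_simps power2_eq_square)
  ultimately show ?thesis unfolding Q_prime_def p_prime_def rad_plus_def rad_minus_def
    by (simp add: divide_simps) (simp add: algebra_simps power2_eq_square)
qed

lemma discriminant_nonneg_scaled:
  fixes p s A :: real
  assumes "0 < p" "0 \<le> s" "s \<le> 1"
  shows "0 \<le> A\<^sup>2 + 4 * (p * s) * (p - A)"
proof (cases "A \<le> p")
  case True
  then show ?thesis using assms by simp
next
  case False
  have "p * s \<le> p" using assms by (simp add: mult_left_le)
  then have "4 * p * (p - A) \<le> 4 * (p * s) * (p - A)" using False by (simp add: mult_right_mono_neg)
  moreover have "A\<^sup>2 + 4 * p * (p - A) = (A - 2 * p)\<^sup>2" by (simp add: algebra_simps power2_eq_square)
  ultimately show ?thesis by (metis add_left_mono order_trans zero_le_power2)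
qed

lemma xi_hat_balanced:
  fixes q' e' q w :: real
  assumes "0 < q'" "0 < e'" "e' < 1" "0 < q" "0 < w" "w \<le> pi / 2"
  defines "\<xi> \<equiv> xi_hat q' e' q w"
  shows "0 \<le> \<xi>" "\<xi> \<le> e'"
    "2 * q / (1 + cos w) - p_prime q' e' / (1 + \<xi>) \<le> 2 * q / (1 - cos w) - p_prime q' e' / (1 - \<xi>)"
    "\<xi> = e' \<or> 2 * q / (1 - cos w) - p_prime q' e' / (1 - \<xi>) \<le> 2 * q / (1 + cos w) - p_prime q' e' / (1 + \<xi>)"
proof -
  define c where "c = cos w"
  define p where "p = p_prime q' e'"
  define P where "P y = 2 * q * c * y\<^sup>2 + p * (sin w)\<^sup>2 * y - 2 * q * c" for y
  have c: "0 \<le> c" "c < 1" using assms cos_monotone_0_pi[of 0 w] by (auto simp: c_def intro!: cos_ge_zero)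
  have "0 < sin w" using assms by (intro sin_gt_zero) auto
  then have b: "0 < p * (sin w)\<^sup>2" using assms by (simp add: p_def p_prime_def)
  have "xi_star q' e' q w
      = 2 * (2 * q * c) / (p * (sin w)\<^sup>2 + sqrt ((p * (sin w)\<^sup>2)\<^sup>2 + 4 * (2 * q * c) * (2 * q * c)))"
    by (simp add: xi_star_def c_def p_def power_mult_distrib power2_eq_square power4_eq_xxxx mult_ac)
  then have root: "P (xi_star q' e' q w) = 0" "0 \<le> xi_star q' e' q w"
    using quadratic_root_stable[OF b, of "2 * q * c" "2 * q * c"] assms c by (simp_all add: P_def)
  show \<xi>: "0 \<le> \<xi>" "\<xi> \<le> e'" using root(2) assms by (simp_all add: \<xi>_def xi_hat_def)
  have "P \<xi> \<le> P (xi_star q' e' q w)"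
    using quadratic_mono_nonneg[OF _ b[THEN less_imp_le] \<xi>(1), of "2 * q * c"] assms c
    by (simp add: P_def \<xi>_def xi_hat_def)
  then have P: "P \<xi> \<le> 0" using root by simp
  have diff: "(2 * q / (1 - c) - p / (1 - \<xi>)) - (2 * q / (1 + c) - p / (1 + \<xi>))
      = -2 * P \<xi> / ((1 - c\<^sup>2) * (1 - \<xi>\<^sup>2))"
    using xi_balance_identity[of c \<xi> q p] \<xi> assms c by (simp add: P_def c_def sin_squared_eq)
  have "0 < 1 - c\<^sup>2" "0 < 1 - \<xi>\<^sup>2" using c \<xi> assms by (simp_all add: abs_square_less_1)
  then have "0 \<le> -2 * P \<xi> / ((1 - c\<^sup>2) * (1 - \<xi>\<^sup>2))"
    using P by (intro divide_nonneg_pos mult_pos_pos) auto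
  then show "2 * q / (1 + cos w) - p_prime q' e' / (1 + \<xi>) \<le> 2 * q / (1 - cos w) - p_prime q' e' / (1 - \<xi>)"
    using diff by (simp add: c_def p_def)
  have "\<xi> \<noteq> e' \<Longrightarrow> P \<xi> = 0" using root(1) by (simp add: \<xi>_def xi_hat_def min_def split: if_splits)
  then show "\<xi> = e' \<or> 2 * q / (1 - cos w) - p_prime q' e' / (1 - \<xi>) \<le> 2 * q / (1 + cos w) - p_prime q' e' / (1 + \<xi>)"
    using diff by (cases "\<xi> = e'") (auto simp: c_def p_def)
qed

lemma e_hat_balanced:
  fixes q' e' q w :: real
  assumes "0 < q'" "0 < e'" "e' < 1" "0 < q" "0 \<le> cos w" "cos w < 1"
  defines "\<eta> \<equiv> e_hat q' e' q w"
  shows "0 \<le> \<eta>" "\<eta> \<le> 1"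
    "0 < \<eta> \<Longrightarrow> rad_plus q (cos w) \<eta> + rad_minus q (cos w) \<eta> \<le> Q_prime q' e' + q'"
    "\<eta> = 1 \<or> Q_prime q' e' + q' \<le> rad_plus q (cos w) \<eta> + rad_minus q (cos w) \<eta>"
proof -
  define c where "c = cos w"
  define p where "p = p_prime q' e'"
  define A where "A = q * (1 - e'\<^sup>2)"
  define P where "P y = p * c\<^sup>2 * y\<^sup>2 + A * y - (p - A)" for y
  have "e'\<^sup>2 < 1" using assms by (simp add: abs_square_less_1)
  then have A: "0 < A" using assms by (simp add: A_def)
  have c: "0 \<le> c" "c < 1" using assms by (simp_all add: c_def)
  have p: "0 < p" using assms by (simp add: p_def p_prime_def)
  have disc: "0 \<le> A\<^sup>2 + 4 * (p * c\<^sup>2) * (p - A)"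
    using discriminant_nonneg_scaled[OF p, of "c\<^sup>2" A] c by (simp add: power_le_one)
  have "e_star q' e' q w = 2 * (p - A) / (A + sqrt (A\<^sup>2 + 4 * (p * c\<^sup>2) * (p - A)))"
    by (simp add: e_star_def c_def p_def A_def mult_ac)
  then have root: "P (e_star q' e' q w) = 0" "0 \<le> e_star q' e' q w \<longleftrightarrow> A \<le> p"
    using quadratic_root_stable[OF A disc] by (simp_all add: P_def)
  have \<eta>: "\<eta> = max 0 (min (e_star q' e' q w) 1)" by (simp add: \<eta>_def e_hat_def)
  show "0 \<le> \<eta>" "\<eta> \<le> 1" by (simp_all add: \<eta>)
  have "\<bar>\<eta> * c\<bar> < 1" using mult_lt_1_of_le_1[of \<eta> c] c \<open>0 \<le> \<eta>\<close> \<open>\<eta> \<le> 1\<close> by simp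
  then have diff: "(Q_prime q' e' + q') - (rad_plus q c \<eta> + rad_minus q c \<eta>)
      = -2 * P \<eta> / ((1 - e'\<^sup>2) * (1 - \<eta>\<^sup>2 * c\<^sup>2))"
    using e_balance_identity[of e' \<eta> c q' q] assms by (simp add: P_def p_def A_def algebra_simps)
  have "(\<eta> * c)\<^sup>2 < 1" using \<open>\<bar>\<eta> * c\<bar> < 1\<close> by (simp add: abs_square_less_1)
  then have "0 < (1 - e'\<^sup>2) * (1 - \<eta>\<^sup>2 * c\<^sup>2)"
    using \<open>e'\<^sup>2 < 1\<close> by (simp add: power_mult_distrib)
  then have sign: "0 \<le> (Q_prime q' e' + q') - (rad_plus q c \<eta> + rad_minus q c \<eta>) \<longleftrightarrow> P \<eta> \<le> 0"
    unfolding diff by (simp add: pos_divide_le_eq)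
  show "0 < \<eta> \<Longrightarrow> rad_plus q (cos w) \<eta> + rad_minus q (cos w) \<eta> \<le> Q_prime q' e' + q'"
  proof -
    assume "0 < \<eta>"
    then have "\<eta> \<le> e_star q' e' q w" by (simp add: \<eta>)
    then have "P \<eta> \<le> P (e_star q' e' q w)"
      using quadratic_mono_nonneg[of "p * c\<^sup>2" A \<eta>] p A \<open>0 < \<eta>\<close> by (simp add: P_def)
    then show ?thesis using sign root(1) by (simp add: c_def)
  qed
  consider "1 \<le> e_star q' e' q w" | "0 \<le> e_star q' e' q w" "e_star q' e' q w < 1" | "e_star q' e' q w < 0"
    by linarith
  then show "\<eta> = 1 \<or> Q_prime q' e' + q' \<le> rad_plus q (cos w) \<eta> + rad_minus q (cos w) \<eta>"
  proof cases
    case 1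
    then show ?thesis by (simp add: \<eta>)
  next
    case 2
    then have "P \<eta> = 0" using root(1) by (simp add: \<eta>)
    then show ?thesis using diff by (simp add: c_def)
  next
    case 3
    then have "\<eta> = 0" "p < A" using root(2) by (simp_all add: \<eta>)
    then have "\<not> P \<eta> \<le> 0" by (simp add: P_def)
    then show ?thesis using sign by (simp add: c_def)
  qed
qed

text \<open>delta_nod with the second orbit parametrised by x = e' cos \<omega>', which ranges over [-e', e'].\<close>
definition nodal_gap :: "real \<Rightarrow> real \<Rightarrow> real \<Rightarrow> real \<Rightarrow> real \<Rightarrow> real \<Rightarrow> real" where
  "nodal_gap q' e' q c e x =
     min \<bar>p_prime q' e' / (1 + x) - rad_plus q c e\<bar> \<bar>p_prime q' e' / (1 - x) - rad_minus q c e\<bar>"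

lemma interval_gap_le_abs_diff:
  fixes u v a b a' b' :: real
  assumes "a \<le> u" "u \<le> b" "a' \<le> v" "v \<le> b'"
  shows "max 0 (max (a - b') (a' - b)) \<le> \<bar>u - v\<bar>"
  using assms by (simp add: abs_if)

lemma nodal_gap_lower_bound:
  fixes q' e' q c e x :: real
  assumes "0 < q'" "0 < e'" "e' < 1" "0 < q" "0 \<le> c" "c < 1"
    and "0 \<le> e" "e \<le> 1" "-e' \<le> x" "x \<le> e'"
  shows "max 0 (max (q' - 2 * q / (1 - c)) (q - Q_prime q' e')) \<le> nodal_gap q' e' q c e x"
proof -
  have "q' \<le> p_prime q' e' / (1 + x)" "p_prime q' e' / (1 + x) \<le> Q_prime q' e'"
    "q' \<le> p_prime q' e' / (1 - x)" "p_prime q' e' / (1 - x) \<le> Q_prime q' e'"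
    using outer_radius_bounds[of q' e' x] outer_radius_bounds[of q' e' "-x"] assms by simp_all
  moreover have "q \<le> rad_plus q c e" "rad_plus q c e \<le> 2 * q / (1 - c)"
    "q \<le> rad_minus q c e" "rad_minus q c e \<le> 2 * q / (1 - c)"
    using rad_plus_bounds[of q c e] rad_minus_bounds[of q c e] rad_plus_le_rad_minus[of q c e] assms
    by simp_all
  ultimately show ?thesis
    unfolding nodal_gap_def by (intro min.boundedI interval_gap_le_abs_diff)
qed

lemma nodal_gap_lower_attained:
  fixes q' e' q c :: real
  assumes "0 < q'" "0 < e'" "e' < 1" "0 < q" "0 \<le> c" "c < 1"
  shows "\<exists>(e, x) \<in> {0..1} \<times> {-e'..e'}.
           nodal_gap q' e' q c e x = max 0 (max (q' - 2 * q / (1 - c)) (q - Q_prime q' e'))"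
proof -
  let ?R = "2 * q / (1 - c)" and ?Q = "Q_prime q' e'"
  note outer = outer_radius_extremes(1,2)[OF assms(1-3)]
  have "q' < ?Q" using outer_radius_extremes(3) assms by simp
  have "q < ?R" using assms by (auto simp: field_simps intro: add_pos_nonneg)
  have "2 * q / (1 + c) \<le> ?R" using rad_plus_le_rad_minus[of q c 1] assms by simp
  consider "?Q < q" | "?R < q'" | "q \<le> ?Q" "q' \<le> ?R" by linarith
  then show ?thesis
  proof cases
    case 1
    then have "nodal_gap q' e' q c 0 (-e') = q - ?Q"
      using \<open>q' < ?Q\<close> by (simp add: nodal_gap_def outer)
    then show ?thesis using 1 \<open>q' < ?Q\<close> \<open>q < ?R\<close> assms by (intro bexI[of _ "(0, -e')"]) auto
  next
    case 2
    then have "nodal_gap q' e' q c 1 (-e') = q' - ?R"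
      using \<open>q' < ?Q\<close> \<open>2 * q / (1 + c) \<le> ?R\<close> by (simp add: nodal_gap_def outer)
    then show ?thesis using 2 \<open>q' < ?Q\<close> \<open>q < ?R\<close> assms by (intro bexI[of _ "(1, -e')"]) auto
  next
    case 3
    define v where "v = max q q'"
    have "v * (1 - c) \<le> 2 * q"
      using 3 \<open>q < ?R\<close> assms by (auto simp: v_def max_def le_divide_eq less_divide_eq)
    then obtain e where e: "0 \<le> e" "e \<le> 1" "rad_minus q c e = v"
      using rad_minus_surj[of q c v] assms by (auto simp: v_def)
    obtain x where x: "-e' \<le> x" "x \<le> e'" "p_prime q' e' / (1 - x) = v"
      using outer_radius_surj[of q' e' v] 3 assms \<open>q' < ?Q\<close> by (auto simp: v_def)
    have "nodal_gap q' e' q c e x = 0"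
      using e x by (simp add: nodal_gap_def)
    then show ?thesis using 3 e x by (intro bexI[of _ "(e, x)"]) auto
  qed
qed

lemma min_deficit_le_at_xi:
  fixes q' e' x \<xi> F R :: real
  assumes "0 < q'" "0 < e'" "e' < 1" "-e' \<le> x" "x \<le> e'" "0 \<le> \<xi>" "\<xi> \<le> e'"
    and \<xi>_balance: "F - p_prime q' e' / (1 + \<xi>) \<le> R - p_prime q' e' / (1 - \<xi>)"
  shows "min (F - p_prime q' e' / (1 + x)) (R - p_prime q' e' / (1 - x))
    \<le> min (R - p_prime q' e' / (1 - \<xi>)) (F - q')"
proof -
  have p: "0 < p_prime q' e'" using assms by (simp add: p_prime_def)
  have outer: "q' \<le> p_prime q' e' / (1 + y)" if "-e' \<le> y" "y \<le> e'" for y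
    using outer_radius_bounds[of q' e' y] assms that by simp
  show ?thesis
  proof (cases "\<xi> \<le> x")
    case True
    then have "p_prime q' e' / (1 - \<xi>) \<le> p_prime q' e' / (1 - x)"
      using p assms by (intro divide_left_mono) auto
    then show ?thesis using outer[of x] assms by auto
  next
    case False
    then have "p_prime q' e' / (1 + \<xi>) \<le> p_prime q' e' / (1 + x)"
      using p assms by (intro divide_left_mono) auto
    then show ?thesis using outer[of \<xi>] \<xi>_balance assms by auto
  qed
qed

lemma min_excess_le_at_eta:
  fixes q' e' q c e \<eta> :: real
  assumes "0 < q" "0 \<le> c" "c < 1" "0 \<le> e" "e \<le> 1" "0 \<le> \<eta>" "\<eta> \<le> 1"
    and \<eta>_balance: "0 < \<eta> \<Longrightarrow> rad_plus q c \<eta> + rad_minus q c \<eta> \<le> Q_prime q' e' + q'"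
  shows "min (Q_prime q' e' - rad_plus q c e) (rad_minus q c e - q')
    \<le> min (Q_prime q' e' - rad_plus q c \<eta>) (2 * q / (1 - c) - q')"
proof (cases "\<eta> \<le> e")
  case True
  then show ?thesis
    using rad_plus_mono[of q c \<eta> e] rad_minus_bounds[of q c e] assms by auto
next
  case False
  then show ?thesis
    using rad_minus_mono[of q c e \<eta>] rad_minus_bounds[of q c e] \<eta>_balance assms by auto
qed

lemma nodal_gap_upper_bound:
  fixes q' e' q c e x \<xi> \<eta> :: real
  assumes "0 < q'" "0 < e'" "e' < 1" "0 < q" "0 \<le> c" "c < 1"
    and "0 \<le> e" "e \<le> 1" "-e' \<le> x" "x \<le> e'"
    and "0 \<le> \<xi>" "\<xi> \<le> e'"
    and \<xi>_balance: "2 * q / (1 + c) - p_prime q' e' / (1 + \<xi>) \<le> 2 * q / (1 - c) - p_prime q' e' / (1 - \<xi>)"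
    and "0 \<le> \<eta>" "\<eta> \<le> 1"
    and \<eta>_balance: "0 < \<eta> \<Longrightarrow> rad_plus q c \<eta> + rad_minus q c \<eta> \<le> Q_prime q' e' + q'"
  shows "nodal_gap q' e' q c e x \<le>
    max (p_prime q' e' - q)
      (max (min (2 * q / (1 - c) - p_prime q' e' / (1 - \<xi>)) (2 * q / (1 + c) - q'))
           (min (Q_prime q' e' - rad_plus q c \<eta>) (2 * q / (1 - c) - q')))"
proof -
  define p where "p = p_prime q' e'"
  define a where "a = p / (1 + x)"
  define b where "b = p / (1 - x)"
  define f where "f = rad_plus q c e"
  define g where "g = rad_minus q c e"
  let ?F = "2 * q / (1 + c)" and ?R = "2 * q / (1 - c)" and ?Q = "Q_prime q' e'"
  have outer: "q' \<le> a" "a \<le> ?Q" "q' \<le> b" "b \<le> ?Q"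
    using outer_radius_bounds[of q' e' x] outer_radius_bounds[of q' e' "-x"] assms
    by (simp_all add: a_def b_def p_def)
  have inner: "q \<le> f" "f \<le> ?F" "f \<le> g" "g \<le> ?R"
    using rad_plus_bounds[of q c e] rad_minus_bounds[of q c e] rad_plus_le_rad_minus[of q c e] assms
    by (simp_all add: f_def g_def)
  have gap: "nodal_gap q' e' q c e x = min \<bar>a - f\<bar> \<bar>b - g\<bar>"
    by (simp add: nodal_gap_def a_def b_def f_def g_def p_def)
  consider "f \<le> a" "g \<le> b" | "a \<le> f" "b \<le> g" | "min \<bar>a - f\<bar> \<bar>b - g\<bar> \<le> min (?Q - f) (g - q')"
    using outer inner by fastforce
  then show ?thesis
  proof cases
    case 1
    have "min \<bar>a - f\<bar> \<bar>b - g\<bar> \<le> min a b - q" using 1 inner by (auto simp: min_def)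
    moreover have "min a b \<le> p" using assms by (auto simp: a_def b_def p_def p_prime_def min_def field_simps)
    ultimately show ?thesis unfolding gap p_def by linarith
  next
    case 2
    then have "min \<bar>a - f\<bar> \<bar>b - g\<bar> \<le> min (?F - a) (?R - b)" using inner by auto
    also have "\<dots> \<le> min (?R - p / (1 - \<xi>)) (?F - q')"
      using min_deficit_le_at_xi[of q' e' x \<xi> ?F ?R] \<xi>_balance assms by (simp add: a_def b_def p_def)
    finally show ?thesis unfolding gap p_def by linarith
  next
    case 3
    also have "min (?Q - f) (g - q') \<le> min (?Q - rad_plus q c \<eta>) (?R - q')"
      using min_excess_le_at_eta[of q c e \<eta> q' e'] \<eta>_balance assms by (simp add: f_def g_def)
    finally show ?thesis unfolding gap by linarith
  qed
qed

lemma nodal_gap_0_0: "nodal_gap q' e' q c 0 0 = \<bar>p_prime q' e' - q\<bar>"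
  by (simp add: nodal_gap_def)

lemma nodal_gap_ge_at_xi:
  fixes q' e' q c \<xi> :: real
  assumes "0 < q'" "0 < e'" "e' < 1"
    and "\<xi> = e' \<or> 2 * q / (1 - c) - p_prime q' e' / (1 - \<xi>) \<le> 2 * q / (1 + c) - p_prime q' e' / (1 + \<xi>)"
  shows "min (2 * q / (1 - c) - p_prime q' e' / (1 - \<xi>)) (2 * q / (1 + c) - q') \<le> nodal_gap q' e' q c 1 \<xi>"
  using assms(4) outer_radius_extremes[OF assms(1-3)] by (auto simp: nodal_gap_def)

lemma nodal_gap_ge_at_eta:
  fixes q' e' q c \<eta> :: real
  assumes "0 < q'" "0 < e'" "e' < 1" "rad_minus q c \<eta> \<le> 2 * q / (1 - c)"
    and "\<eta> = 1 \<or> Q_prime q' e' + q' \<le> rad_plus q c \<eta> + rad_minus q c \<eta>"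
  shows "min (Q_prime q' e' - rad_plus q c \<eta>) (2 * q / (1 - c) - q') \<le> nodal_gap q' e' q c \<eta> (-e')"
  using assms(4,5) outer_radius_extremes(1,2)[OF assms(1-3)] by (auto simp: nodal_gap_def)

lemma max3_attained:
  fixes g :: "'a \<Rightarrow> 'b::linorder"
  assumes "\<forall>s\<in>S. g s \<le> max a (max b c)"
    and "x \<in> S" "a \<le> g x" "y \<in> S" "b \<le> g y" "z \<in> S" "c \<le> g z"
  shows "\<exists>s\<in>S. g s = max a (max b c)"
proof -
  have "max a (max b c) \<in> {a, b, c}" by (auto simp: max_def)
  then show ?thesis using assms by (metis antisym empty_iff insert_iff)
qed

text \<open>For \<omega> = 0 and e = 1 the descending-node radius is infinite, so only the ascending
  node counts; in nodal_gap the descending term would read 2q/0 = 0 instead.\<close>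
definition aligned_gap :: "real \<Rightarrow> real \<Rightarrow> real \<Rightarrow> real \<Rightarrow> real \<Rightarrow> real" where
  "aligned_gap q' e' q e x =
     (if e = 1 then \<bar>p_prime q' e' / (1 + x) - q\<bar> else nodal_gap q' e' q 1 e x)"

lemma aligned_gap_bounds:
  fixes q' e' q e x :: real
  assumes "0 < q'" "0 < e'" "e' < 1" "0 < q" "0 \<le> e" "e \<le> 1" "-e' \<le> x" "x \<le> e'"
  shows "max 0 (q - Q_prime q' e') \<le> aligned_gap q' e' q e x"
    "aligned_gap q' e' q e x \<le> max (q - q') (Q_prime q' e' - q)"
proof -
  have outer: "q' \<le> p_prime q' e' / (1 + y)" "p_prime q' e' / (1 + y) \<le> Q_prime q' e'"
    if "-e' \<le> y" "y \<le> e'" for y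
    using outer_radius_bounds[of q' e' y] assms that by simp_all
  have asc: "max 0 (q - Q_prime q' e') \<le> \<bar>p_prime q' e' / (1 + x) - q\<bar>"
    "\<bar>p_prime q' e' / (1 + x) - q\<bar> \<le> max (q - q') (Q_prime q' e' - q)"
    using outer[of x] assms by (auto simp: abs_if)
  moreover have "rad_plus q 1 e = q" using assms by (simp add: rad_plus_def)
  ultimately show "aligned_gap q' e' q e x \<le> max (q - q') (Q_prime q' e' - q)"
    by (auto simp: aligned_gap_def nodal_gap_def)
  have "e \<noteq> 1 \<Longrightarrow> q \<le> rad_minus q 1 e" using assms by (simp add: rad_minus_def field_simps)
  then have "e \<noteq> 1 \<Longrightarrow> max 0 (q - Q_prime q' e') \<le> \<bar>p_prime q' e' / (1 - x) - rad_minus q 1 e\<bar>"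
    using outer[of "-x"] assms by (auto simp: abs_if)
  then show "max 0 (q - Q_prime q' e') \<le> aligned_gap q' e' q e x"
    using asc \<open>rad_plus q 1 e = q\<close> by (auto simp: aligned_gap_def nodal_gap_def)
qed

lemma aligned_gap_lower_attained:
  fixes q' e' q :: real
  assumes "0 < q'" "0 < e'" "e' < 1" "0 < q"
  shows "\<exists>(e, x) \<in> {0..1} \<times> {-e'..e'}. aligned_gap q' e' q e x = max 0 (q - Q_prime q' e')"
proof -
  note outer = outer_radius_extremes(1,2)[OF assms(1-3)]
  have "q' < Q_prime q' e'" using outer_radius_extremes(3) assms by simp
  consider "Q_prime q' e' < q" | "q' \<le> q" "q \<le> Q_prime q' e'" | "q < q'" by linarith
  then show ?thesis
  proof cases
    case 1
    then have "aligned_gap q' e' q 0 (-e') = q - Q_prime q' e'"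
      using \<open>q' < Q_prime q' e'\<close> by (simp add: aligned_gap_def nodal_gap_def outer)
    then show ?thesis using 1 assms by (intro bexI[of _ "(0, -e')"]) auto
  next
    case 2
    then obtain y where y: "-e' \<le> y" "y \<le> e'" "p_prime q' e' / (1 - y) = q"
      using outer_radius_surj[of q' e' q] assms by auto
    then have "aligned_gap q' e' q 1 (-y) = 0" by (simp add: aligned_gap_def)
    then show ?thesis using 2 y assms by (intro bexI[of _ "(1, -y)"]) auto
  next
    case 3
    then obtain e where e: "0 \<le> e" "e \<le> 1" "e < 1" "rad_minus q 1 e = q'"
      using rad_minus_surj[of q 1 q'] assms by auto
    then have "aligned_gap q' e' q e (-e') = 0" by (simp add: aligned_gap_def nodal_gap_def outer)
    then show ?thesis using 3 e assms \<open>q' < Q_prime q' e'\<close> by (intro bexI[of _ "(e, -e')"]) auto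
  qed
qed

lemma aligned_gap_upper_attained:
  fixes q' e' q :: real
  assumes "0 < q'" "0 < e'" "e' < 1"
  shows "\<exists>(e, x) \<in> {0..1} \<times> {-e'..e'}. aligned_gap q' e' q e x = max (q - q') (Q_prime q' e' - q)"
proof -
  note outer = outer_radius_extremes(1,2)[OF assms(1-3)]
  have "q' < Q_prime q' e'" using outer_radius_extremes(3) assms by simp
  show ?thesis
  proof (cases "Q_prime q' e' - q \<le> q - q'")
    case True
    then have "aligned_gap q' e' q 1 e' = max (q - q') (Q_prime q' e' - q)"
      using \<open>q' < Q_prime q' e'\<close> by (simp add: aligned_gap_def outer)
    then show ?thesis using assms by (intro bexI[of _ "(1, e')"]) auto
  next
    case False
    then have "aligned_gap q' e' q 1 (-e') = max (q - q') (Q_prime q' e' - q)"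
      using \<open>q' < Q_prime q' e'\<close> by (simp add: aligned_gap_def outer)
    then show ?thesis using assms by (intro bexI[of _ "(1, -e')"]) auto
  qed
qed

lemma abs_mult_cos_le:
  fixes e' w :: real
  assumes "0 \<le> e'"
  shows "\<bar>e' * cos w\<bar> \<le> e'"
  using mult_left_mono[OF abs_cos_le_one[of w] assms] assms by (simp add: abs_mult)

lemma delta_nod_eq_nodal_gap:
  fixes q' e' q e w w' :: real
  assumes "0 < e'" "e' < 1" "0 \<le> cos w" "cos w < 1" "0 \<le> e" "e \<le> 1"
  shows "delta_nod q' e' q e w w' = ereal (nodal_gap q' e' q (cos w) e (e' * cos w'))"
proof -
  have "\<bar>e' * cos w'\<bar> < 1" using abs_mult_cos_le[of e' w'] assms by simp
  then have "1 + e' * cos w' \<noteq> 0" "1 - e' * cos w' \<noteq> 0" by auto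
  moreover have "e * cos w < 1" using mult_lt_1_of_le_1 assms by simp
  moreover have "0 \<le> e * cos w" using assms by simp
  ultimately show ?thesis
    by (simp add: delta_nod_def r_plus_def r_minus_def pdiv_def nodal_gap_def rad_plus_def rad_minus_def p_prime_def)
qed

lemma delta_nod_eq_aligned_gap:
  fixes q' e' q e w' :: real
  assumes "0 < e'" "e' < 1" "0 \<le> e" "e \<le> 1"
  shows "delta_nod q' e' q e 0 w' = ereal (aligned_gap q' e' q e (e' * cos w'))"
proof -
  have "\<bar>e' * cos w'\<bar> < 1" using abs_mult_cos_le[of e' w'] assms by simp
  then have "1 + e' * cos w' \<noteq> 0" "1 - e' * cos w' \<noteq> 0" by auto
  then show ?thesis using assms
    by (simp add: delta_nod_def r_plus_def r_minus_def pdiv_def aligned_gap_def nodal_gap_def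
        rad_plus_def rad_minus_def p_prime_def)
qed

lemma D1_extrema_transfer:
  fixes d :: "real \<Rightarrow> real \<Rightarrow> ereal" and G :: "real \<Rightarrow> real \<Rightarrow> real"
  assumes "0 < e'"
    and d: "\<And>e w'. 0 \<le> e \<Longrightarrow> e \<le> 1 \<Longrightarrow> d e w' = ereal (G e (e' * cos w'))"
    and "\<exists>(e, x) \<in> {0..1} \<times> {-e'..e'}. G e x = lo" "\<forall>(e, x) \<in> {0..1} \<times> {-e'..e'}. lo \<le> G e x"
    and "\<exists>(e, x) \<in> {0..1} \<times> {-e'..e'}. G e x = hi" "\<forall>(e, x) \<in> {0..1} \<times> {-e'..e'}. G e x \<le> hi"
  shows "(\<exists>(e, w') \<in> D1. d e w' = ereal lo) \<and> (\<forall>(e, w') \<in> D1. ereal lo \<le> d e w')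
       \<and> (\<exists>(e, w') \<in> D1. d e w' = ereal hi) \<and> (\<forall>(e, w') \<in> D1. d e w' \<le> ereal hi)"
proof -
  have to_box: "(e, e' * cos w') \<in> {0..1} \<times> {-e'..e'}" "0 \<le> e" "e \<le> 1" if "(e, w') \<in> D1" for e w'
    using that abs_mult_cos_le[of e' w'] assms(1) by (auto simp: D1_def abs_le_iff)
  have from_box: "(e, arccos (x / e')) \<in> D1" "e' * cos (arccos (x / e')) = x"
    if "(e, x) \<in> {0..1} \<times> {-e'..e'}" for e x
  proof -
    have "-1 \<le> x / e'" "x / e' \<le> 1" using that assms(1) by (auto simp: field_simps)
    then show "(e, arccos (x / e')) \<in> D1" "e' * cos (arccos (x / e')) = x"
      using that assms(1) arccos_lbound arccos_ubound by (auto simp: D1_def)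
  qed
  have ex: "\<exists>(e, w') \<in> D1. d e w' = ereal m" if m: "\<exists>(e, x) \<in> {0..1} \<times> {-e'..e'}. G e x = m" for m
  proof -
    obtain e x where "(e, x) \<in> {0..1} \<times> {-e'..e'}" "G e x = m" using m by blast
    then show ?thesis using from_box[of e x] d[of e] by (intro bexI[of _ "(e, arccos (x / e'))"]) auto
  qed
  have all: "\<forall>(e, w') \<in> D1. P (d e w')" if "\<forall>(e, x) \<in> {0..1} \<times> {-e'..e'}. P (ereal (G e x))" for P
  proof clarify
    fix e w' assume "(e, w') \<in> D1"
    then show "P (d e w')" using that to_box[of e w'] d[of e w'] by auto
  qed
  show ?thesis using assms(3-6) by (intro conjI ex all) auto
qed

lemma nodal_extrema_oblique:
  fixes q' e' q w :: real
  assumes "0 < q'" "0 < e'" "e' < 1" "0 < q" "0 < w" "w \<le> pi / 2"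
  shows "(\<exists>(e, w') \<in> D1. delta_nod q' e' q e w w' = max 0 (max (l_int q' e' q w) (l_ext q' e' q w)))
       \<and> (\<forall>(e, w') \<in> D1. max 0 (max (l_int q' e' q w) (l_ext q' e' q w)) \<le> delta_nod q' e' q e w w')
       \<and> (\<exists>(e, w') \<in> D1. delta_nod q' e' q e w w' = max (u_int q' e' q w) (max (u_ext q' e' q w) (u_link q' e' q w)))
       \<and> (\<forall>(e, w') \<in> D1. delta_nod q' e' q e w w' \<le> max (u_int q' e' q w) (max (u_ext q' e' q w) (u_link q' e' q w)))"
proof -
  define c where "c = cos w"
  define \<xi> where "\<xi> = xi_hat q' e' q w"
  define \<eta> where "\<eta> = e_hat q' e' q w"
  let ?p = "p_prime q' e'" and ?F = "2 * q / (1 + c)" and ?R = "2 * q / (1 - c)" and ?Q = "Q_prime q' e'"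
  define lo where "lo = max 0 (max (q' - ?R) (q - ?Q))"
  define hi where "hi = max (?p - q) (max (min (?R - ?p / (1 - \<xi>)) (?F - q')) (min (?Q - rad_plus q c \<eta>) (?R - q')))"
  have c: "0 \<le> c" "c < 1" using assms cos_monotone_0_pi[of 0 w] by (auto simp: c_def intro!: cos_ge_zero)
  note \<xi> = xi_hat_balanced[OF assms, folded \<xi>_def c_def]
  note \<eta> = e_hat_balanced[OF assms(1-4) c[unfolded c_def], folded \<eta>_def c_def]
  have lo_eq: "max 0 (max (l_int q' e' q w) (l_ext q' e' q w)) = ereal lo"
    using c by (simp add: lo_def l_int_def l_ext_def pdiv_def c_def zero_ereal_def)
  have hi_eq: "max (u_int q' e' q w) (max (u_ext q' e' q w) (u_link q' e' q w)) = ereal hi"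
    using c by (simp add: hi_def u_int_def u_ext_def u_link_def pdiv_def rad_plus_def
        \<xi>_def \<eta>_def c_def)
  have upper: "\<forall>(e, x) \<in> {0..1} \<times> {-e'..e'}. nodal_gap q' e' q c e x \<le> hi"
    using nodal_gap_upper_bound[OF assms(1-4) c _ _ _ _ \<xi>(1-3) \<eta>(1-3)] by (auto simp: hi_def)
  have "\<exists>z \<in> {0..1} \<times> {-e'..e'}. (\<lambda>(e, x). nodal_gap q' e' q c e x) z = hi"
    unfolding hi_def
  proof (rule max3_attained[where x = "(0, 0)" and y = "(1, \<xi>)" and z = "(\<eta>, -e')"])
    show "?p - q \<le> (\<lambda>(e, x). nodal_gap q' e' q c e x) (0, 0)" by (simp add: nodal_gap_0_0)
    show "min (?R - ?p / (1 - \<xi>)) (?F - q') \<le> (\<lambda>(e, x). nodal_gap q' e' q c e x) (1, \<xi>)"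
      using nodal_gap_ge_at_xi[of q' e' \<xi> q c] \<xi>(4) assms by simp
    show "min (?Q - rad_plus q c \<eta>) (?R - q') \<le> (\<lambda>(e, x). nodal_gap q' e' q c e x) (\<eta>, -e')"
      using nodal_gap_ge_at_eta[of q' e' q c \<eta>] rad_minus_bounds[of q c \<eta>] \<eta>(1,2,4) assms c by simp
  qed (use upper[unfolded hi_def] \<xi>(1,2) \<eta>(1,2) assms in auto)
  then have "\<exists>(e, x) \<in> {0..1} \<times> {-e'..e'}. nodal_gap q' e' q c e x = hi"
    by (simp add: case_prod_beta)
  then show ?thesis
    unfolding lo_eq hi_eq
    using D1_extrema_transfer[of e' "\<lambda>e w'. delta_nod q' e' q e w w'" "nodal_gap q' e' q c" lo hi]
      delta_nod_eq_nodal_gap[of e' w] nodal_gap_lower_attained[OF assms(1-4) c]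
      nodal_gap_lower_bound[OF assms(1-4) c] upper assms c
    by (auto simp: lo_def c_def)
qed

lemma nodal_extrema_aligned:
  fixes q' e' q :: real
  assumes "0 < q'" "0 < e'" "e' < 1" "0 < q"
  shows "(\<exists>(e, w') \<in> D1. delta_nod q' e' q e 0 w' = max 0 (max (l_int q' e' q 0) (l_ext q' e' q 0)))
       \<and> (\<forall>(e, w') \<in> D1. max 0 (max (l_int q' e' q 0) (l_ext q' e' q 0)) \<le> delta_nod q' e' q e 0 w')
       \<and> (\<exists>(e, w') \<in> D1. delta_nod q' e' q e 0 w' = max (u_int q' e' q 0) (max (u_ext q' e' q 0) (u_link q' e' q 0)))
       \<and> (\<forall>(e, w') \<in> D1. delta_nod q' e' q e 0 w' \<le> max (u_int q' e' q 0) (max (u_ext q' e' q 0) (u_link q' e' q 0)))"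
proof -
  define lo where "lo = max 0 (q - Q_prime q' e')"
  define hi where "hi = max (q - q') (Q_prime q' e' - q)"
  have lo_eq: "max 0 (max (l_int q' e' q 0) (l_ext q' e' q 0)) = ereal lo"
    by (simp add: lo_def l_int_def l_ext_def pdiv_def zero_ereal_def)
  have "p_prime q' e' \<le> Q_prime q' e'" using assms by (simp add: p_prime_def Q_prime_def field_simps)
  moreover have "q * (1 + e_hat q' e' q 0) / (1 + e_hat q' e' q 0) = q" by (simp add: e_hat_def)
  ultimately have hi_eq: "max (u_int q' e' q 0) (max (u_ext q' e' q 0) (u_link q' e' q 0)) = ereal hi"
    by (simp add: hi_def u_int_def u_ext_def u_link_def pdiv_def) (simp add: max_def)
  show ?thesis
    unfolding lo_eq hi_eq
    using D1_extrema_transfer[of e' "\<lambda>e w'. delta_nod q' e' q e 0 w'" "aligned_gap q' e' q" lo hi]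
      delta_nod_eq_aligned_gap aligned_gap_lower_attained[OF assms] aligned_gap_upper_attained[OF assms(1-3)]
      aligned_gap_bounds[OF assms] assms
    by (auto simp: lo_def hi_def)
qed

theorem proposition1:
  fixes q' e' q_max q w :: real
  assumes "q' > 0" and "0 < e'" and "e' < 1" and "q_max > 0"
    and "0 < q" and "q \<le> q_max" and "0 \<le> w" and "w \<le> pi / 2"
  shows "(\<exists>(e, w') \<in> D1. delta_nod q' e' q e w w' = max 0 (max (l_int q' e' q w) (l_ext q' e' q w)))
       \<and> (\<forall>(e, w') \<in> D1. max 0 (max (l_int q' e' q w) (l_ext q' e' q w)) \<le> delta_nod q' e' q e w w')
       \<and> (\<exists>(e, w') \<in> D1. delta_nod q' e' q e w w' = max (u_int q' e' q w) (max (u_ext q' e' q w) (u_link q' e' q w)))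
       \<and> (\<forall>(e, w') \<in> D1. delta_nod q' e' q e w w' \<le> max (u_int q' e' q w) (max (u_ext q' e' q w) (u_link q' e' q w)))"
proof (cases "w = 0")
  case True
  then show ?thesis using nodal_extrema_aligned[OF assms(1-3,5)] by simp
next
  case False
  then show ?thesis using nodal_extrema_oblique[OF assms(1-3,5) _ assms(8)] assms(7) by simp
qed

end
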